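(* Let $n\ge0$, and let $e=(x,y)$ be an arc of $A(n)$. For each arc $(x,x')$ of $A(n)$ different from $e$, there exists exactly one arc $(y,y')$ of $A(n)$ such that $(x',y')$ is an arc of $A(n)$.
   Context: A hyperbinary expansion of a nonnegative integer $n$ is a word $x_0\cdots x_k$ over $\{0,1,2\}$ with $x_0\ne0$ and $\sum_i x_i2^{k-i}=n$; the empty word is the unique expansion of $0$. $\mathcal H(n)$ is the set of such expansions. $A(n)$ is the directed graph on $\mathcal H(n)$ with the following labeled arcs, for arbitrary words $\mathbf x,\mathbf y$ whenever both endpoints lie in $\mathcal H(n)$: \begin{itemize} \item an arc labeled $\to$ from $\mathbf x02\mathbf y$ to $\mathbf x10\mathbf y$ and from $2\mathbf y$ to $10\mathbf y$; \item an arc labeled $\twoheadrightarrow$ from $\mathbf x12\mathbf y$ to $\mathbf x20\mathbf y$. \end{itemize} *)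

theory Defs
  imports Main
begin

definition hval :: "nat list \<Rightarrow> nat" where
  "hval w = (\<Sum>i<length w. w ! i * 2 ^ (length w - 1 - i))"

definition H :: "nat \<Rightarrow> nat list set" where
  "H n = {w. set w \<subseteq> {0,1,2} \<and> (w \<noteq> [] \<longrightarrow> hd w \<noteq> 0) \<and> hval w = n}"

definition arc1 :: "nat \<Rightarrow> nat list \<Rightarrow> nat list \<Rightarrow> bool" where
  "arc1 n v w \<longleftrightarrow> v \<in> H n \<and> w \<in> H n \<and>
     ((\<exists>x y. v = x @ [0,2] @ y \<and> w = x @ [1,0] @ y) \<or>
      (\<exists>y. v = 2 # y \<and> w = [1,0] @ y))"

definition arc2 :: "nat \<Rightarrow> nat list \<Rightarrow> nat list \<Rightarrow> bool" where
  "arc2 n v w \<longleftrightarrow> v \<in> H n \<and> w \<in> H n \<and>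
     (\<exists>x y. v = x @ [1,2] @ y \<and> w = x @ [2,0] @ y)"

definition arcA :: "nat \<Rightarrow> nat list \<Rightarrow> nat list \<Rightarrow> bool" where
  "arcA n v w \<longleftrightarrow> arc1 n v w \<or> arc2 n v w"

end

theory Submission
  imports Defs
begin

text \<open>Read a word through its digit function, indexed from the least significant end.
  An arc of \<open>A(n)\<close> is then a carry at a position \<open>j\<close> holding the digit 2 whose next digit is at most 1:
  the 2 becomes 0 and the next digit grows by one. Two distinct arcs out of \<open>x\<close> carry at positions
  \<open>A \<noteq> B\<close> that are not adjacent (both hold a 2, and a 2 cannot sit just above a carry position),
  so the two carries commute and give the common successor \<open>y'\<close>. Conversely, an arc into \<open>y'\<close> from
  \<open>y\<close> must carry at \<open>B\<close>: an arc from \<open>x'\<close> leaves the digit 0 at \<open>B\<close> at most 1, while a carry out of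
  \<open>y\<close> elsewhere keeps the 2 there. Finally a hyperbinary expansion is determined by its digit function.\<close>

definition digit :: "nat list \<Rightarrow> nat \<Rightarrow> nat" where
  "digit w j = (if j < length w then rev w ! j else 0)"

definition carry :: "(nat \<Rightarrow> nat) \<Rightarrow> nat \<Rightarrow> nat \<Rightarrow> nat" where
  "carry f j = f(j := 0, Suc j := Suc (f (Suc j)))"

definition carryable :: "(nat \<Rightarrow> nat) \<Rightarrow> nat \<Rightarrow> bool" where
  "carryable f j \<longleftrightarrow> f j = 2 \<and> f (Suc j) \<le> 1"

lemma hval_Nil [simp]: "hval [] = 0"
  by (simp add: hval_def)

lemma hval_Cons [simp]: "hval (a # w) = a * 2 ^ length w + hval w"
  unfolding hval_def length_Cons sum.lessThan_Suc_shift by simp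

lemma hval_append [simp]: "hval (xs @ ys) = hval xs * 2 ^ length ys + hval ys"
  by (induction xs) (auto simp: algebra_simps power_add)

lemma digit_append_pair:
  "digit (x @ a # b # y) = (\<lambda>k. if k < length y then rev y ! k else if k = length y then b
     else if k = Suc (length y) then a else digit x (k - length y - 2))"
  by (rule ext) (auto simp: digit_def nth_append)

lemma digit_Cons:
  "digit (b # y) = (\<lambda>k. if k < length y then rev y ! k else if k = length y then b else 0)"
  by (rule ext) (auto simp: digit_def nth_append)

lemma digit_Cons_Cons:
  "digit (a # b # y) = (\<lambda>k. if k < length y then rev y ! k else if k = length y then b
     else if k = Suc (length y) then a else 0)"
  by (rule ext) (auto simp: digit_def nth_append)

lemma carry_commute:
  assumes "i \<noteq> j" "Suc i \<noteq> j" "Suc j \<noteq> i"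
  shows "carry (carry f i) j = carry (carry f j) i"
  using assms by (auto simp: carry_def fun_eq_iff)

lemma length_le_if_digit_eq:
  assumes "v \<noteq> [] \<Longrightarrow> hd v \<noteq> 0" and "digit v = digit w"
  shows "length v \<le> length w"
proof (rule ccontr)
  assume long: "\<not> length v \<le> length w"
  then have "digit v (length v - 1) = hd v"
    by (cases v) (auto simp: digit_def nth_append)
  moreover have "digit w (length v - 1) = 0"
    using long by (auto simp: digit_def)
  moreover have "v \<noteq> []"
    using long by auto
  ultimately show False
    using assms by auto
qed

lemma eq_if_digit_eq:
  assumes "v \<noteq> [] \<Longrightarrow> hd v \<noteq> 0" and "w \<noteq> [] \<Longrightarrow> hd w \<noteq> 0" and "digit v = digit w"
  shows "v = w"
proof -
  have len: "length v = length w"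
    using length_le_if_digit_eq assms by (metis le_antisym)
  have "rev v = rev w"
  proof (rule nth_equalityI)
    fix i assume "i < length (rev v)"
    then show "rev v ! i = rev w ! i"
      using fun_cong[OF assms(3), of i] len by (simp add: digit_def)
  qed (simp add: len)
  then show ?thesis by simp
qed

lemma H_eq_if_digit_eq: "v \<in> H n \<Longrightarrow> w \<in> H m \<Longrightarrow> digit v = digit w \<Longrightarrow> v = w"
  by (rule eq_if_digit_eq) (auto simp: H_def)

lemma arcA_carry:
  assumes "arcA n v w"
  shows "v \<in> H n" "w \<in> H n" "\<exists>j. carryable (digit v) j \<and> digit w = carry (digit v) j"
proof -
  show "v \<in> H n" "w \<in> H n"
    using assms by (auto simp: arcA_def arc1_def arc2_def)
  show "\<exists>j. carryable (digit v) j \<and> digit w = carry (digit v) j"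
    using assms unfolding arcA_def arc1_def arc2_def
  proof (elim disjE conjE exE)
    fix x y assume "v = x @ [0, 2] @ y" "w = x @ [1, 0] @ y"
    then show ?thesis
      by (intro exI[of _ "length y"]) (auto simp: carryable_def digit_append_pair carry_def fun_eq_iff)
  next
    fix y assume "v = 2 # y" "w = [1, 0] @ y"
    then show ?thesis
      by (intro exI[of _ "length y"])
        (auto simp: carryable_def digit_Cons digit_Cons_Cons carry_def fun_eq_iff nth_append)
  next
    fix x y assume "v = x @ [1, 2] @ y" "w = x @ [2, 0] @ y"
    then show ?thesis
      by (intro exI[of _ "length y"]) (auto simp: carryable_def digit_append_pair carry_def fun_eq_iff)
  qed
qed

lemma carryable_arcA:
  assumes v: "v \<in> H n" and "carryable (digit v) j"
  shows "\<exists>w. arcA n v w \<and> digit w = carry (digit v) j"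
proof -
  have two: "digit v j = 2" and low: "digit v (Suc j) \<le> 1"
    using assms(2) by (auto simp: carryable_def)
  have jl: "j < length v" using two by (auto simp: digit_def split: if_splits)
  define k where "k = length v - Suc j"
  define y where "y = drop (Suc k) v"
  have ly: "length y = j" using jl by (simp add: y_def k_def)
  have "v ! k = 2" using two jl by (simp add: digit_def rev_nth k_def)
  then have v_split: "v = take k v @ 2 # y"
    using id_take_nth_drop[of k v] jl by (simp add: k_def y_def)
  have hv: "set v \<subseteq> {0,1,2}" "v \<noteq> [] \<longrightarrow> hd v \<noteq> 0" "hval v = n"
    using v by (auto simp: H_def)
  show ?thesis
  proof (cases k)
    case 0
    then have v2: "v = 2 # y" using v_split by simp
    define w where "w = 1 # 0 # y"
    have "w \<in> H n" using hv v2 by (auto simp: w_def H_def)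
    moreover have "digit w = carry (digit v) j" using ly v2
      by (auto simp: w_def digit_Cons digit_Cons_Cons carry_def fun_eq_iff nth_append)
    ultimately show ?thesis using v v2 unfolding arcA_def arc1_def by (auto simp: w_def)
  next
    case (Suc k')
    define x where "x = take k' v"
    define a where "a = v ! k'"
    have "take k v = x @ [a]" using Suc jl by (simp add: x_def a_def k_def take_Suc_conv_app_nth)
    then have vs: "v = x @ a # 2 # y" using v_split by simp
    then have a: "a = 0 \<or> a = 1" using low ly by (auto simp: digit_append_pair)
    define w where "w = x @ (a + 1) # 0 # y"
    have "hd w \<noteq> 0" using hv vs a by (cases x) (auto simp: w_def)
    then have wH: "w \<in> H n" using hv vs a by (auto simp: w_def H_def)
    have "digit w = carry (digit v) j" using ly vs
      by (auto simp: w_def digit_append_pair carry_def fun_eq_iff)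
    moreover have "arc1 n v w \<or> arc2 n v w"
    proof (cases "a = 0")
      case True
      then have "arc1 n v w" using wH v vs unfolding arc1_def
        by (intro conjI disjI1 exI[of _ x] exI[of _ y]) (auto simp: w_def)
      then show ?thesis ..
    next
      case False
      then have "arc2 n v w" using a wH v vs unfolding arc2_def
        by (intro conjI exI[of _ x] exI[of _ y]) (auto simp: w_def)
      then show ?thesis ..
    qed
    ultimately show ?thesis unfolding arcA_def by blast
  qed
qed

lemma arcA_successor_unique:
  assumes "arcA n y y2" "arcA n x' y2" "arcA n y y'"
    and "digit x' B = 0" "digit y B = 2" "digit y' = carry (digit y) B"
  shows "y2 = y'"
proof -
  obtain C where y2H: "y2 \<in> H n" and y2_carry: "digit y2 = carry (digit y) C"
    using arcA_carry[OF assms(1)] by blast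
  obtain E where E: "carryable (digit x') E" and y2_carry': "digit y2 = carry (digit x') E"
    using arcA_carry[OF assms(2)] by blast
  have "E \<noteq> B" using E assms(4) by (auto simp: carryable_def)
  then have "digit y2 B \<le> 1" using y2_carry' assms(4) by (auto simp: carry_def)
  then have "C = B" using y2_carry assms(5) by (auto simp: carry_def split: if_splits)
  then show "y2 = y'"
    using H_eq_if_digit_eq[OF y2H arcA_carry(2)[OF assms(3)]] y2_carry assms(6) by simp
qed

theorem mainTheorem9:
  fixes n :: nat and x y x' :: "nat list"
  assumes "arcA n x y"
    and "arcA n x x'"
    and "x' \<noteq> y"
  shows "\<exists>!y'. arcA n y y' \<and> arcA n x' y'"
proof -
  obtain A where yH: "y \<in> H n" and A: "carryable (digit x) A"
    and y_carry: "digit y = carry (digit x) A" using arcA_carry[OF assms(1)] by blast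
  obtain B where x'H: "x' \<in> H n" and B: "carryable (digit x) B"
    and x'_carry: "digit x' = carry (digit x) B" using arcA_carry[OF assms(2)] by blast
  have "A \<noteq> B" using y_carry x'_carry H_eq_if_digit_eq[OF yH x'H] assms(3) by auto
  moreover have "Suc A \<noteq> B" "Suc B \<noteq> A" using A B by (auto simp: carryable_def)
  ultimately have apart: "A \<noteq> B" "Suc A \<noteq> B" "Suc B \<noteq> A" .
  have y_B: "carryable (digit y) B" using y_carry apart B by (auto simp: carryable_def carry_def)
  then obtain y' where yy': "arcA n y y'" and y'_carry: "digit y' = carry (digit y) B"
    using carryable_arcA[OF yH] by blast
  have "carryable (digit x') A" using x'_carry apart A by (auto simp: carryable_def carry_def)
  then obtain z where x'z: "arcA n x' z" and z_carry: "digit z = carry (digit x') A"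
    using carryable_arcA[OF x'H] by blast
  have "z = y'"
    using H_eq_if_digit_eq arcA_carry(2)[OF x'z] arcA_carry(2)[OF yy'] z_carry y'_carry
      y_carry x'_carry carry_commute[OF apart] by metis
  moreover have "digit x' B = 0" "digit y B = 2"
    using x'_carry y_B by (auto simp: carry_def carryable_def)
  ultimately show ?thesis
    using yy' x'z arcA_successor_unique y'_carry by blast
qed

end
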